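(* $\gamma^{L-ID}(\mathcal{H})=\frac38$: every local identifying code in the hexagonal grid has density at least $3/8$, and there is a local identifying code in the hexagonal grid of density $3/8$.
   Context: The hexagonal grid $\mathcal{H}$ has vertex set $\mathbb{Z}^2$, with $\mathbf{u}=(i,j)$ and $\mathbf{v}$ adjacent iff $\mathbf{u}-\mathbf{v}\in\{(\pm1,0),(0,(-1)^{i+j+1})\}$. For a nonempty $C\subseteq\mathbb{Z}^2$ and vertex $\mathbf{u}$, $I(\mathbf{u})=N[\mathbf{u}]\cap C$ where $N[\mathbf{u}]$ is the closed neighbourhood. $C$ is a local identifying code if $I(\mathbf{u})\ne\emptyset$ for all $\mathbf{u}$ and $I(\mathbf{u})\ne I(\mathbf{v})$ for all adjacent $\mathbf{u},\mathbf{v}$. The density of $C$ is $D(C)=\limsup_{n\to\infty}|C\cap Q_n|/|Q_n|$ with $Q_n=\{(i,j)\in\mathbb{Z}^2:|i|\le n,|j|\le n\}$. $\gamma^{L-ID}(G)$ denotes the smallest density of a local identifying code in $G$. *)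

theory Defs
  imports "HOL-Analysis.Analysis"
begin

type_synonym vertex = "int \<times> int"

definition hex_adj :: "vertex \<Rightarrow> vertex \<Rightarrow> bool" where
  "hex_adj u v \<longleftrightarrow>
     (let (i, j) = u; (k, l) = v in
       (i - k, j - l) \<in> {(1, 0), (-1, 0), (0, if even (i + j) then -1 else 1)})"

definition hex_closed_nbhd :: "vertex \<Rightarrow> vertex set" where
  "hex_closed_nbhd u = insert u {v. hex_adj u v}"

definition I_set :: "vertex set \<Rightarrow> vertex \<Rightarrow> vertex set" where
  "I_set C u = hex_closed_nbhd u \<inter> C"

definition local_identifying_code :: "vertex set \<Rightarrow> bool" where
  "local_identifying_code C \<longleftrightarrow>
     C \<noteq> {} \<and>
     (\<forall>u. I_set C u \<noteq> {}) \<and>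
     (\<forall>u v. hex_adj u v \<longrightarrow> I_set C u \<noteq> I_set C v)"

definition Q :: "nat \<Rightarrow> vertex set" where
  "Q n = {(i, j). \<bar>i\<bar> \<le> int n \<and> \<bar>j\<bar> \<le> int n}"

definition density :: "vertex set \<Rightarrow> ereal" where
  "density C = limsup (\<lambda>n. ereal (real (card (C \<inter> Q n)) / real (card (Q n))))"

end

theory Submission
  imports Defs
begin

text \<open>Lower bound by discharging: every vertex u needs charge 1 from the codewords in N[u],
  and the separation property guarantees that no codeword c ever has to hand out more than
  8/3 to the vertices of N[c]. Counting in a box therefore gives |C \<inter> Q(n+1)| \<ge> (3/8) |Q n|.
  Upper bound: in the code taking i mod 8 \<in> {0,1,2} on even rows and i mod 8 \<in> {4,5,6} on
  odd rows, every vertex and every edge is checked on one 8 \<times> 2 period.\<close>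

abbreviation hex_neighbours :: "vertex \<Rightarrow> vertex set" where
  "hex_neighbours u \<equiv> {v. hex_adj u v}"

lemma hex_adj_iff:
  "hex_adj (i, j) v \<longleftrightarrow> v = (i + 1, j) \<or> v = (i - 1, j) \<or> v = (i, if even (i + j) then j + 1 else j - 1)"
  by (cases v) (auto simp: hex_adj_def)

lemma hex_neighbours_eq:
  "hex_neighbours (i, j) = {(i + 1, j), (i - 1, j), (i, if even (i + j) then j + 1 else j - 1)}"
  using hex_adj_iff by auto

lemma hex_adj_sym: "hex_adj u v \<Longrightarrow> hex_adj v u"
  by (cases u; cases v) (auto simp: hex_adj_iff split: if_splits)

lemma hex_adj_parity: "hex_adj (i, j) (k, l) \<Longrightarrow> even (i + j) \<noteq> even (k + l)"
  by (auto simp: hex_adj_iff split: if_splits)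

lemma hex_adj_irrefl: "\<not> hex_adj u u"
  by (cases u) (auto simp: hex_adj_iff)

lemma hex_adj_no_triangle: "hex_adj u v \<Longrightarrow> hex_adj u w \<Longrightarrow> \<not> hex_adj v w"
  by (cases u; cases v; cases w) (metis hex_adj_parity)

lemma hex_neighbours_three: "\<exists>a b d. hex_neighbours u = {a, b, d} \<and> distinct [u, a, b, d]"
proof (cases u)
  case (Pair i j)
  show ?thesis
    unfolding Pair hex_neighbours_eq
    by (rule exI[of _ "(i + 1, j)"], rule exI[of _ "(i - 1, j)"],
        rule exI[of _ "(i, if even (i + j) then j + 1 else j - 1)"]) auto
qed

lemma finite_hex_neighbours: "finite (hex_neighbours u)"
  by (cases u) (simp add: hex_neighbours_eq)

lemma finite_hex_closed_nbhd: "finite (hex_closed_nbhd u)"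
  unfolding hex_closed_nbhd_def using finite_hex_neighbours by simp

lemma hex_closed_nbhd_sym: "c \<in> hex_closed_nbhd u \<Longrightarrow> u \<in> hex_closed_nbhd c"
  unfolding hex_closed_nbhd_def using hex_adj_sym by blast

lemma I_set_eq:
  "I_set C u = (if u \<in> C then insert u (hex_neighbours u \<inter> C) else hex_neighbours u \<inter> C)"
  unfolding I_set_def hex_closed_nbhd_def by auto

lemma card_Int_three:
  "distinct [a, b, d] \<Longrightarrow> card ({a, b, d} \<inter> C) =
     (if a \<in> C then 1 else 0) + (if b \<in> C then 1 else 0) + (if d \<in> C then (1::nat) else 0)"
  by (cases "a \<in> C"; cases "b \<in> C"; cases "d \<in> C") (auto simp: Int_insert_left card_insert_if)

lemma singleton_if_card_le_1: "finite A \<Longrightarrow> card A \<le> 1 \<Longrightarrow> a \<in> A \<Longrightarrow> A = {a}"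
  by (auto simp: card_le_Suc0_iff_eq)

section \<open>Discharging\<close>

definition code_degree :: "vertex set \<Rightarrow> vertex \<Rightarrow> nat" where
  "code_degree C u = card (hex_neighbours u \<inter> C)"

text \<open>The charge a codeword c sends to a vertex u of N[c].\<close>

definition share :: "vertex set \<Rightarrow> vertex \<Rightarrow> vertex \<Rightarrow> real" where
  "share C u c =
    (if c \<notin> C then 0
     else if u = c then (if code_degree C c = 1 then 2/3 else 1)
     else if hex_adj u c then
       (if u \<in> C then (if code_degree C u = 1 then 1/3 else 0)
        else (if code_degree C u = 1 then 1 else 1/2))
     else 0)"

lemma share_nonneg: "share C u c \<ge> 0"
  by (simp add: share_def)

lemma share_received_ge_1:
  assumes "local_identifying_code C"
  shows "1 \<le> (\<Sum>c\<in>hex_closed_nbhd u. share C u c)"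
proof -
  obtain a b d where nb: "hex_neighbours u = {a, b, d}" and di: "distinct [u, a, b, d]"
    using hex_neighbours_three by blast
  have adj: "hex_adj u a" "hex_adj u b" "hex_adj u d"
    using nb by auto
  have deg: "code_degree C u = (if a \<in> C then 1 else 0) + (if b \<in> C then 1 else 0) + (if d \<in> C then 1 else 0)"
    unfolding code_degree_def nb using di by (simp add: card_Int_three)
  have nbhd: "hex_closed_nbhd u = {u, a, b, d}"
    unfolding hex_closed_nbhd_def nb ..
  have dominated: "{u, a, b, d} \<inter> C \<noteq> {}"
    using assms nbhd unfolding local_identifying_code_def I_set_def by metis
  have "(\<Sum>c\<in>hex_closed_nbhd u. share C u c) = share C u u + share C u a + share C u b + share C u d"
    unfolding nbhd using di by (simp add: algebra_simps)
  then show ?thesis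
    using dominated di adj deg
    by (cases "u \<in> C"; cases "a \<in> C"; cases "b \<in> C"; cases "d \<in> C") (auto simp: share_def)
qed

lemma code_degree_ge_if_sole_code_neighbour:
  assumes code: "local_identifying_code C" and "c \<in> C" and "hex_adj x c"
    and x_nbrs: "hex_neighbours x \<inter> C = {c}"
  shows "code_degree C c \<ge> (if x \<in> C then 2 else 1)"
proof -
  have separated: "I_set C x \<noteq> I_set C c"
    using code assms unfolding local_identifying_code_def by blast
  have c_nbrs_finite: "finite (hex_neighbours c \<inter> C)"
    using finite_hex_neighbours by simp
  show ?thesis
  proof (cases "x \<in> C")
    case False
    have "code_degree C c \<ge> 1"
    proof (rule ccontr)
      assume "\<not> 1 \<le> code_degree C c"
      then have "hex_neighbours c \<inter> C = {}"
        using c_nbrs_finite unfolding code_degree_def by (simp add: not_le card_eq_0_iff)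
      then show False
        using separated False \<open>c \<in> C\<close> x_nbrs by (simp add: I_set_eq)
    qed
    with False show ?thesis
      by simp
  next
    case True
    have "x \<in> hex_neighbours c \<inter> C"
      using assms True hex_adj_sym by blast
    have "code_degree C c \<ge> 2"
    proof (rule ccontr)
      assume "\<not> 2 \<le> code_degree C c"
      then have "hex_neighbours c \<inter> C = {x}"
        using c_nbrs_finite \<open>x \<in> hex_neighbours c \<inter> C\<close> unfolding code_degree_def
        by (simp add: singleton_if_card_le_1)
      then show False
        using separated True \<open>c \<in> C\<close> x_nbrs by (auto simp: I_set_eq)
    qed
    with True show ?thesis
      by simp
  qed
qed

lemma share_sent_to_neighbour_le:
  assumes code: "local_identifying_code C" and "c \<in> C" and "hex_adj x c"
  shows "share C x c \<le>
    (if x \<in> C then (if code_degree C c \<ge> 2 then 1/3 else 0)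
     else (if code_degree C c \<ge> 1 then 1 else 1/2))"
proof -
  have "x \<noteq> c"
    using assms hex_adj_irrefl by metis
  show ?thesis
  proof (cases "code_degree C x = 1")
    case False
    with assms \<open>x \<noteq> c\<close> show ?thesis
      by (auto simp: share_def)
  next
    case True
    have "c \<in> hex_neighbours x \<inter> C"
      using assms by auto
    then have "hex_neighbours x \<inter> C = {c}"
      using True finite_hex_neighbours unfolding code_degree_def by (simp add: singleton_if_card_le_1)
    then have "code_degree C c \<ge> (if x \<in> C then 2 else 1)"
      using code_degree_ge_if_sole_code_neighbour assms by blast
    with \<open>x \<noteq> c\<close> assms True show ?thesis
      by (auto simp: share_def split: if_splits)
  qed
qed

lemma share_sent_le_8_3:
  assumes code: "local_identifying_code C" and cC: "c \<in> C"
  shows "(\<Sum>u\<in>hex_closed_nbhd c. share C u c) \<le> 8/3"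
proof -
  obtain a b d where nb: "hex_neighbours c = {a, b, d}" and di: "distinct [c, a, b, d]"
    using hex_neighbours_three by blast
  have adj: "hex_adj a c" "hex_adj b c" "hex_adj d c"
    using nb hex_adj_sym by blast+
  have deg: "code_degree C c = (if a \<in> C then 1 else 0) + (if b \<in> C then 1 else 0) + (if d \<in> C then 1 else 0)"
    unfolding code_degree_def nb using di by (simp add: card_Int_three)
  have nbhd: "hex_closed_nbhd c = {c, a, b, d}"
    unfolding hex_closed_nbhd_def nb ..
  have "(\<Sum>u\<in>hex_closed_nbhd c. share C u c) = share C c c + share C a c + share C b c + share C d c"
    unfolding nbhd using di by (simp add: algebra_simps)
  moreover have "share C c c = (if code_degree C c = 1 then 2/3 else 1)"
    using cC by (simp add: share_def)
  moreover note share_sent_to_neighbour_le[OF code cC adj(1)]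
    share_sent_to_neighbour_le[OF code cC adj(2)]
    share_sent_to_neighbour_le[OF code cC adj(3)]
  ultimately show ?thesis
    using deg by (cases "a \<in> C"; cases "b \<in> C"; cases "d \<in> C") simp_all
qed

lemma card_le_8_3_code_card:
  assumes code: "local_identifying_code C" and "finite A" "finite B"
    and nbhd: "\<And>u. u \<in> A \<Longrightarrow> hex_closed_nbhd u \<subseteq> B"
  shows "real (card A) \<le> 8/3 * real (card (C \<inter> B))"
proof -
  have "real (card A) = (\<Sum>u\<in>A. 1)"
    by simp
  also have "\<dots> \<le> (\<Sum>u\<in>A. \<Sum>c\<in>hex_closed_nbhd u. share C u c)"
    by (rule sum_mono) (rule share_received_ge_1[OF code])
  also have "\<dots> = (\<Sum>u\<in>A. \<Sum>c\<in>{c. c \<in> B \<and> c \<in> hex_closed_nbhd u}. share C u c)"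
  proof (rule sum.cong[OF refl])
    fix u
    assume "u \<in> A"
    then have "{c. c \<in> B \<and> c \<in> hex_closed_nbhd u} = hex_closed_nbhd u"
      using nbhd by blast
    then show "(\<Sum>c\<in>hex_closed_nbhd u. share C u c) = (\<Sum>c\<in>{c. c \<in> B \<and> c \<in> hex_closed_nbhd u}. share C u c)"
      by simp
  qed
  also have "\<dots> = (\<Sum>c\<in>B. \<Sum>u\<in>{u. u \<in> A \<and> c \<in> hex_closed_nbhd u}. share C u c)"
    by (rule sum.swap_restrict[OF assms(2,3)])
  also have "\<dots> \<le> (\<Sum>c\<in>B. if c \<in> C then 8/3 else 0)"
  proof (rule sum_mono)
    fix c
    show "(\<Sum>u\<in>{u. u \<in> A \<and> c \<in> hex_closed_nbhd u}. share C u c) \<le> (if c \<in> C then 8/3 else 0)"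
    proof (cases "c \<in> C")
      case True
      have "{u. u \<in> A \<and> c \<in> hex_closed_nbhd u} \<subseteq> hex_closed_nbhd c"
        using hex_closed_nbhd_sym by blast
      then have "(\<Sum>u\<in>{u. u \<in> A \<and> c \<in> hex_closed_nbhd u}. share C u c) \<le> (\<Sum>u\<in>hex_closed_nbhd c. share C u c)"
        by (rule sum_mono2[OF finite_hex_closed_nbhd]) (simp add: share_nonneg)
      also have "\<dots> \<le> 8/3"
        by (rule share_sent_le_8_3[OF code True])
      finally show ?thesis
        using True by simp
    qed (simp add: share_def)
  qed
  also have "\<dots> = 8/3 * real (card (C \<inter> B))"
    using \<open>finite B\<close> by (simp add: sum.If_cases Int_commute Collect_mem_eq)
  finally show ?thesis .
qed

section \<open>Densities\<close>

lemma Q_eq: "Q n = {- int n..int n} \<times> {- int n..int n}"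
  unfolding Q_def by auto

lemma finite_Q: "finite (Q n)"
  unfolding Q_eq by simp

lemma card_Q: "card (Q n) = (2 * n + 1)^2"
proof -
  have "card {- int n..int n} = 2 * n + 1"
    by simp
  then show ?thesis
    unfolding Q_eq by (simp add: card_cartesian_product power2_eq_square)
qed

lemma hex_closed_nbhd_subset_Q_Suc: "u \<in> Q n \<Longrightarrow> hex_closed_nbhd u \<subseteq> Q (Suc n)"
  by (cases u) (auto simp: Q_def hex_closed_nbhd_def hex_adj_iff)

lemma tendsto_le_limsup:
  assumes "b \<longlonglongrightarrow> l" and "eventually (\<lambda>n. b n \<le> a n) sequentially"
  shows "ereal l \<le> limsup (\<lambda>n. ereal (a n))"
proof -
  have "limsup (\<lambda>n. ereal (b n)) = ereal l"
    using assms(1) by (intro lim_imp_Limsup) simp_all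
  moreover have "limsup (\<lambda>n. ereal (b n)) \<le> limsup (\<lambda>n. ereal (a n))"
    using assms(2) by (intro Limsup_mono) simp
  ultimately show ?thesis by simp
qed

lemma limsup_le_tendsto:
  assumes "b \<longlonglongrightarrow> l" and "eventually (\<lambda>n. a n \<le> b n) sequentially"
  shows "limsup (\<lambda>n. ereal (a n)) \<le> ereal l"
proof -
  have "limsup (\<lambda>n. ereal (b n)) = ereal l"
    using assms(1) by (intro lim_imp_Limsup) simp_all
  moreover have "limsup (\<lambda>n. ereal (a n)) \<le> limsup (\<lambda>n. ereal (b n))"
    using assms(2) by (intro Limsup_mono) simp
  ultimately show ?thesis by simp
qed

lemma shifted_ratio_tendsto_1: "(\<lambda>n. (real n + b) / (real n + c)) \<longlonglongrightarrow> 1"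
proof -
  have "(\<lambda>n. (1 + b * (1 / real n)) / (1 + c * (1 / real n))) \<longlonglongrightarrow> (1 + b * 0) / (1 + c * 0)"
    by (intro tendsto_intros lim_1_over_n) simp
  moreover have "eventually (\<lambda>n. (1 + b * (1 / real n)) / (1 + c * (1 / real n)) = (real n + b) / (real n + c)) sequentially"
    using eventually_gt_at_top[of 0] by eventually_elim (simp add: divide_simps)
  ultimately show ?thesis
    by (simp add: Lim_transform_eventually)
qed

lemma density_ge_3_8:
  assumes code: "local_identifying_code C"
  shows "ereal (3/8) \<le> density C"
  unfolding density_def
proof (rule tendsto_le_limsup)
  show "(\<lambda>n. 3/8 * ((real n - 1/2) / (real n + 1/2))^2) \<longlonglongrightarrow> 3/8"
    using tendsto_mult_left[OF tendsto_power[OF shifted_ratio_tendsto_1], of "3/8" "-1/2" "1/2" 2]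
    by simp
  show "eventually (\<lambda>n. 3/8 * ((real n - 1/2) / (real n + 1/2))^2 \<le> real (card (C \<inter> Q n)) / real (card (Q n))) sequentially"
    unfolding eventually_sequentially
  proof (intro exI allI impI)
    fix n :: nat
    assume "1 \<le> n"
    then obtain m where n: "n = Suc m"
      by (cases n) auto
    have "real (card (Q m)) \<le> 8/3 * real (card (C \<inter> Q n))"
      using card_le_8_3_code_card[OF code finite_Q finite_Q hex_closed_nbhd_subset_Q_Suc] n by simp
    moreover have "real (card (Q m)) = (2 * real m + 1)^2"
      by (simp add: card_Q)
    ultimately have "3/8 * (2 * real m + 1)^2 / (2 * real m + 3)^2 \<le> real (card (C \<inter> Q n)) / (2 * real m + 3)^2"
      by (intro divide_right_mono) simp_all
    moreover have "(real n - 1/2) / (real n + 1/2) = (2 * real m + 1) / (2 * real m + 3)"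
      by (simp add: n field_simps)
    moreover have "real (card (Q n)) = (2 * real m + 3)^2"
      by (simp add: card_Q n algebra_simps)
    ultimately show "3/8 * ((real n - 1/2) / (real n + 1/2))^2 \<le> real (card (C \<inter> Q n)) / real (card (Q n))"
      by (simp add: power_divide)
  qed
qed

section \<open>A code of density 3/8\<close>

definition stripe_code :: "vertex set" where
  "stripe_code = {(i, j). (even j \<and> i mod 8 \<in> {0, 1, 2}) \<or> (odd j \<and> i mod 8 \<in> {4, 5, 6})}"

lemma stripe_code_mem:
  "(i, j) \<in> stripe_code \<longleftrightarrow> (even j \<and> i mod 8 \<in> {0, 1, 2}) \<or> (odd j \<and> i mod 8 \<in> {4, 5, 6})"
  unfolding stripe_code_def by simp

lemma int_pair_mod_8_2_cases:
  assumes "\<And>q p r s. r \<in> {0, 1, 2, 3, 4, 5, 6, 7} \<Longrightarrow> s \<in> {0, 1} \<Longrightarrow> P (8 * q + r) (2 * p + s)"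
  shows "P (i::int) (j::int)"
proof -
  have "P (8 * (i div 8) + i mod 8) (2 * (j div 2) + j mod 2)"
    by (rule assms) auto
  then show ?thesis by simp
qed

lemma stripe_code_dominates: "\<exists>w\<in>hex_closed_nbhd (i, j). w \<in> stripe_code"
  unfolding hex_closed_nbhd_def hex_neighbours_eq
  apply (induction i j rule: int_pair_mod_8_2_cases)
  apply (simp only: insert_iff empty_iff)
  apply (elim disjE; simp add: stripe_code_mem)
  done

lemma stripe_code_separates_horizontal:
  "\<exists>w\<in>hex_neighbours (i, j) \<union> hex_neighbours (i + 1, j) - {(i, j), (i + 1, j)}. w \<in> stripe_code"
  unfolding hex_neighbours_eq
  apply (induction i j rule: int_pair_mod_8_2_cases)
  apply (simp only: insert_iff empty_iff)
  apply (elim disjE; simp add: insert_Diff_if stripe_code_mem)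
  done

lemma stripe_code_separates_vertical:
  "even (i + j) \<Longrightarrow>
    \<exists>w\<in>hex_neighbours (i, j) \<union> hex_neighbours (i, j + 1) - {(i, j), (i, j + 1)}. w \<in> stripe_code"
  unfolding hex_neighbours_eq
  apply (induction i j rule: int_pair_mod_8_2_cases)
  apply (simp only: insert_iff empty_iff)
  apply (elim disjE; simp add: insert_Diff_if stripe_code_mem)
  done

lemma stripe_code_separates:
  assumes "hex_adj u v"
  shows "\<exists>w\<in>hex_neighbours u \<union> hex_neighbours v - {u, v}. w \<in> stripe_code"
proof -
  obtain i j where u: "u = (i, j)"
    by (cases u)
  have swap: "hex_neighbours u \<union> hex_neighbours v - {u, v} = hex_neighbours v \<union> hex_neighbours u - {v, u}"
    by auto
  from assms consider "v = (i + 1, j)" | "v = (i - 1, j)"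
    | "even (i + j)" "v = (i, j + 1)" | "odd (i + j)" "v = (i, j - 1)"
    unfolding u hex_adj_iff by (auto split: if_splits)
  then show ?thesis
  proof cases
    case 1
    then show ?thesis
      using stripe_code_separates_horizontal[of i j] u by simp
  next
    case 2
    then show ?thesis
      using stripe_code_separates_horizontal[of "i - 1" j] u swap by simp
  next
    case 3
    then show ?thesis
      using stripe_code_separates_vertical[of i j] u by simp
  next
    case 4
    then show ?thesis
      using stripe_code_separates_vertical[of i "j - 1"] u swap by simp
  qed
qed

text \<open>In a triangle-free graph, N[u] and N[v] of an edge uv differ exactly off {u, v}.\<close>

lemma I_set_neq_if_separated:
  assumes uv: "hex_adj u v" and "w \<in> C" and w: "w \<in> hex_neighbours u \<union> hex_neighbours v - {u, v}"
  shows "I_set C u \<noteq> I_set C v"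
proof
  assume eq: "I_set C u = I_set C v"
  from w consider "hex_adj u w" "w \<noteq> v" | "hex_adj v w" "w \<noteq> u"
    by auto
  then show False
  proof cases
    case 1
    then have "w \<in> I_set C u"
      using \<open>w \<in> C\<close> by (simp add: I_set_def hex_closed_nbhd_def)
    then have "w \<in> hex_closed_nbhd v"
      using eq unfolding I_set_def by blast
    then have "hex_adj v w"
      using 1 unfolding hex_closed_nbhd_def by simp
    then show False
      using hex_adj_no_triangle[OF uv 1(1)] by simp
  next
    case 2
    then have "w \<in> I_set C v"
      using \<open>w \<in> C\<close> by (simp add: I_set_def hex_closed_nbhd_def)
    then have "w \<in> hex_closed_nbhd u"
      using eq unfolding I_set_def by blast
    then have "hex_adj u w"
      using 2 unfolding hex_closed_nbhd_def by simp
    then show False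
      using hex_adj_no_triangle[OF hex_adj_sym[OF uv] 2(1)] by simp
  qed
qed

lemma local_identifying_code_stripe_code: "local_identifying_code stripe_code"
  unfolding local_identifying_code_def
proof (intro conjI allI impI)
  show "stripe_code \<noteq> {}"
    using stripe_code_mem[of 0 0] by auto
  fix u
  show "I_set stripe_code u \<noteq> {}"
    using stripe_code_dominates[of "fst u" "snd u"] by (auto simp: I_set_def)
  fix v
  assume "hex_adj u v"
  then show "I_set stripe_code u \<noteq> I_set stripe_code v"
    using stripe_code_separates I_set_neq_if_separated by blast
qed

lemma card_blocks_of_8: "4 * card {(- int n) div 8 .. int n div 8} \<le> n + 8"
proof -
  have "4 * (a - b + 1) \<le> N + 8" if "8 * a \<le> N" "- N - 8 < 8 * b" for a b N :: int
    using that by presburger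
  moreover have "8 * (int n div 8) \<le> int n" "- int n - 8 < 8 * ((- int n) div 8)"
    by linarith+
  ultimately have "4 * (int n div 8 - (- int n) div 8 + 1) \<le> int n + 8"
    by blast
  then show ?thesis
    by (simp add: card_atLeastAtMost_int)
qed

text \<open>Each row of Q n meets at most 3 vertices of stripe_code per block of 8 consecutive columns.\<close>

lemma card_stripe_code_Q: "4 * card (stripe_code \<inter> Q n) \<le> 3 * (2 * n + 1) * (n + 8)"
proof -
  define D where "D = {(- int n) div 8 .. int n div 8}"
  define g where "g = (\<lambda>(q::int, j::int, t::int). (8 * q + t + (if even j then 0 else 4), j))"
  have "stripe_code \<inter> Q n \<subseteq> g ` (D \<times> {- int n..int n} \<times> {0, 1, 2})"
  proof
    fix x
    assume x: "x \<in> stripe_code \<inter> Q n"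
    obtain i j where xij: "x = (i, j)"
      by (cases x)
    have ij: "- int n \<le> i" "i \<le> int n" "- int n \<le> j" "j \<le> int n"
      using x xij by (auto simp: Q_def)
    define t where "t = i mod 8 - (if even j then 0 else 4)"
    have "t \<in> {0, 1, 2}"
      using x xij stripe_code_mem unfolding t_def by auto
    moreover have "i div 8 \<in> D"
      unfolding D_def using ij by (auto intro: zdiv_mono1)
    moreover have "x = g (i div 8, j, t)"
      unfolding g_def t_def xij by simp
    ultimately show "x \<in> g ` (D \<times> {- int n..int n} \<times> {0, 1, 2})"
      using ij by auto
  qed
  then have "card (stripe_code \<inter> Q n) \<le> card (g ` (D \<times> {- int n..int n} \<times> {0, 1, 2}))"
    by (rule card_mono[rotated]) (simp add: D_def)
  also have "\<dots> \<le> card (D \<times> {- int n..int n} \<times> {0::int, 1, 2})"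
    by (rule card_image_le) (simp add: D_def)
  also have "\<dots> = card D * (2 * n + 1) * 3"
  proof -
    have "card {- int n..int n} = 2 * n + 1"
      by simp
    then show ?thesis
      by (simp add: card_cartesian_product)
  qed
  finally have "4 * card (stripe_code \<inter> Q n) \<le> 4 * card D * ((2 * n + 1) * 3)"
    by (simp add: algebra_simps)
  also have "\<dots> \<le> (n + 8) * ((2 * n + 1) * 3)"
    using card_blocks_of_8 unfolding D_def by (rule mult_right_mono) simp
  finally show ?thesis
    by (simp add: algebra_simps)
qed

lemma density_stripe_code_le: "density stripe_code \<le> ereal (3/8)"
  unfolding density_def
proof (rule limsup_le_tendsto)
  show "(\<lambda>n. 3/8 * ((real n + 8) / (real n + 1/2))) \<longlonglongrightarrow> 3/8"
    using tendsto_mult_left[OF shifted_ratio_tendsto_1, of "3/8" 8 "1/2"] by simp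
  show "eventually (\<lambda>n. real (card (stripe_code \<inter> Q n)) / real (card (Q n)) \<le> 3/8 * ((real n + 8) / (real n + 1/2))) sequentially"
  proof (rule always_eventually, rule allI)
    fix n
    have count: "real (4 * card (stripe_code \<inter> Q n)) \<le> real (3 * (2 * n + 1) * (n + 8))"
      using card_stripe_code_Q by (simp only: of_nat_le_iff)
    have "real (card (stripe_code \<inter> Q n)) / real (card (Q n)) = real (card (stripe_code \<inter> Q n)) / (2 * real n + 1)^2"
      by (simp add: card_Q)
    also have "\<dots> \<le> (3 * (2 * real n + 1) * (real n + 8) / 4) / (2 * real n + 1)^2"
      using count by (intro divide_right_mono) (simp_all add: algebra_simps)
    also have "\<dots> = 3/8 * ((real n + 8) / (real n + 1/2))"
      by (simp add: divide_simps power2_eq_square) (simp add: algebra_simps)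
    finally show "real (card (stripe_code \<inter> Q n)) / real (card (Q n)) \<le> 3/8 * ((real n + 8) / (real n + 1/2))" .
  qed
qed

theorem mainTheorem14:
  shows "(\<forall>C. local_identifying_code C \<longrightarrow> density C \<ge> ereal (3/8)) \<and>
         (\<exists>C. local_identifying_code C \<and> density C = ereal (3/8))"
proof
  show "\<forall>C. local_identifying_code C \<longrightarrow> density C \<ge> ereal (3/8)"
    using density_ge_3_8 by blast
  show "\<exists>C. local_identifying_code C \<and> density C = ereal (3/8)"
    using local_identifying_code_stripe_code density_stripe_code_le
      density_ge_3_8[OF local_identifying_code_stripe_code]
    by (intro exI[of _ stripe_code]) auto
qed

end
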